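(* Let $d\ge1$. Let $G_A=(V_A,E_A)$ with configuration $\mathbf{p}^A$ and $G_B=(V_B,E_B)$ with configuration $\mathbf{p}^B$ be two universally rigid frameworks in general position in $\mathbb{R}^d$, with $V_C=V_A\cap V_B$ a proper subset of both $V_A$ and $V_B$, $|V_C|\ge d+1$, and $\mathbf{p}^A_i=\mathbf{p}^B_i$ for $i\in V_C$. Let $F$ be the set of edges $\{i,j\}\in E_B\setminus E_A$ with $i,j\in V_C$. Then the edge-reduced framework attachment, i.e. the framework with graph $(V_A\cup V_B,(E_A\cup E_B)\setminus F)$ and configuration $\mathbf{p}$ (where $\mathbf{p}_i=\mathbf{p}^A_i$ for $i\in V_A$, $\mathbf{p}_i=\mathbf{p}^B_i$ for $i\in V_B$), is universally rigid.
   Context: A framework $G(\mathbf{p})$ in $\mathbb{R}^d$ is a finite graph $G=(V,E)$ with points $\mathbf{p}_i\in\mathbb{R}^d$, $i\in V$. It is in general position if any $d+1$ distinct vertices have affinely independent points. $G(\mathbf{p})$ and $G(\mathbf{q})$ are equivalent if they have equal lengths $\|\mathbf{p}_i-\mathbf{p}_j\|=\|\mathbf{q}_i-\mathbf{q}_j\|$ on all edges, and congruent if these equalities hold for all pairs of vertices. $G(\mathbf{p})$ in $\mathbb{R}^d$ is universally rigid if for every $d'\ge d$ every framework $G(\mathbf{q})$ in $\mathbb{R}^{d'}$ equivalent to it is congruent to it. The roles of $G_A$ and $G_B$ are interchangeable: the removed edges are those between shared vertices present in only one (fixed) of the two frameworks. *)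

theory Defs
  imports Main Complex_Main
begin

text \<open>Points of R^n are represented as functions nat => real whose coordinates
  with index >= n vanish; this lets us quantify over all dimensions d' >= d
  and embeds R^d into R^d' by zero padding.\<close>

definition in_Rn :: "nat \<Rightarrow> (nat \<Rightarrow> real) \<Rightarrow> bool" where
  "in_Rn n x \<longleftrightarrow> (\<forall>k\<ge>n. x k = 0)"

definition edist :: "nat \<Rightarrow> (nat \<Rightarrow> real) \<Rightarrow> (nat \<Rightarrow> real) \<Rightarrow> real" where
  "edist n x y = sqrt (\<Sum>k<n. (x k - y k)^2)"

definition graph :: "'v set \<Rightarrow> 'v set set \<Rightarrow> bool" where
  "graph V E \<longleftrightarrow> finite V \<and>
     (\<forall>e\<in>E. \<exists>i j. i \<in> V \<and> j \<in> V \<and> i \<noteq> j \<and> e = {i, j})"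

definition framework :: "nat \<Rightarrow> 'v set \<Rightarrow> 'v set set \<Rightarrow> ('v \<Rightarrow> nat \<Rightarrow> real) \<Rightarrow> bool" where
  "framework d V E p \<longleftrightarrow> graph V E \<and> (\<forall>i\<in>V. in_Rn d (p i))"

definition equivalent :: "nat \<Rightarrow> 'v set set \<Rightarrow> ('v \<Rightarrow> nat \<Rightarrow> real) \<Rightarrow> ('v \<Rightarrow> nat \<Rightarrow> real) \<Rightarrow> bool" where
  "equivalent n E p q \<longleftrightarrow>
     (\<forall>i j. {i, j} \<in> E \<longrightarrow> edist n (p i) (p j) = edist n (q i) (q j))"

definition congruent :: "nat \<Rightarrow> 'v set \<Rightarrow> ('v \<Rightarrow> nat \<Rightarrow> real) \<Rightarrow> ('v \<Rightarrow> nat \<Rightarrow> real) \<Rightarrow> bool" where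
  "congruent n V p q \<longleftrightarrow>
     (\<forall>i\<in>V. \<forall>j\<in>V. edist n (p i) (p j) = edist n (q i) (q j))"

definition universally_rigid :: "nat \<Rightarrow> 'v set \<Rightarrow> 'v set set \<Rightarrow> ('v \<Rightarrow> nat \<Rightarrow> real) \<Rightarrow> bool" where
  "universally_rigid d V E p \<longleftrightarrow>
     (\<forall>d'\<ge>d. \<forall>q. (\<forall>i\<in>V. in_Rn d' (q i)) \<longrightarrow> equivalent d' E p q \<longrightarrow> congruent d' V p q)"

definition aff_indep :: "'v set \<Rightarrow> ('v \<Rightarrow> nat \<Rightarrow> real) \<Rightarrow> bool" where
  "aff_indep S p \<longleftrightarrow>
     (\<forall>c. (\<Sum>i\<in>S. c i) = 0 \<and> (\<forall>k. (\<Sum>i\<in>S. c i * p i k) = 0) \<longrightarrow> (\<forall>i\<in>S. c i = 0))"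

definition general_position :: "nat \<Rightarrow> 'v set \<Rightarrow> ('v \<Rightarrow> nat \<Rightarrow> real) \<Rightarrow> bool" where
  "general_position d V p \<longleftrightarrow> (\<forall>S\<subseteq>V. card S = d + 1 \<longrightarrow> aff_indep S p)"

end

theory Submission imports Defs begin

text \<open>Let q be equivalent to the attached framework. All edges of G_A survive, so q is
  congruent to p^A on V_A. The removed edges join shared vertices, so their lengths are kept
  too; hence q is equivalent, and so congruent, to p^B on V_B. It remains to compare
  i in V_A - V_B with j in V_B. General position yields d + 1 affinely independent shared
  vertices S, and p_i = \<Sum>_v w_v p_v is an affine combination of them. For an affine
  combination, |\<Sum>_v w_v p_v - y|^2 = \<Sum>_v w_v |p_v - y|^2 - \<Sum>_u,v w_u w_v |p_u - p_v|^2 / 2,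
  whose right-hand side involves only distances already known to be preserved. With y = q_i
  this shows q_i = \<Sum>_v w_v q_v; with y = q_j it then gives |q_i - q_j| = |p_i - p_j|.\<close>

definition sqdist :: "nat \<Rightarrow> (nat \<Rightarrow> real) \<Rightarrow> (nat \<Rightarrow> real) \<Rightarrow> real" where
  "sqdist n x y = (\<Sum>k<n. (x k - y k)^2)"

lemma sqdist_self [simp]: "sqdist n x x = 0"
  by (simp add: sqdist_def)

lemma sqdist_commute: "sqdist n x y = sqdist n y x"
  by (simp add: sqdist_def power2_commute)

lemma sqdist_nonneg: "sqdist n x y \<ge> 0"
  by (simp add: sqdist_def sum_nonneg)

lemma sqdist_eq_0_iff: "sqdist n x y = 0 \<longleftrightarrow> (\<forall>k<n. x k = y k)"
  by (auto simp: sqdist_def sum_nonneg_eq_0_iff)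

lemma sqdist_cong: "(\<And>k. k < n \<Longrightarrow> x k = x' k) \<Longrightarrow> sqdist n x y = sqdist n x' y"
  by (simp add: sqdist_def)

lemma edist_eq_iff_sqdist_eq: "edist n x y = edist n x' y' \<longleftrightarrow> sqdist n x y = sqdist n x' y'"
  using sqdist_nonneg[of n x y] sqdist_nonneg[of n x' y'] by (simp add: edist_def flip: sqdist_def)

lemma congruent_iff_sqdist:
  "congruent n V p q \<longleftrightarrow> (\<forall>i\<in>V. \<forall>j\<in>V. sqdist n (q i) (q j) = sqdist n (p i) (p j))"
  unfolding congruent_def edist_eq_iff_sqdist_eq by metis

lemma graph_edge_in_vertices: "graph V E \<Longrightarrow> {i, j} \<in> E \<Longrightarrow> i \<in> V \<and> j \<in> V"
  unfolding graph_def by (metis doubleton_eq_iff)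

lemma universally_rigid_cong:
  assumes "graph V E" "\<forall>i\<in>V. p' i = p i" "universally_rigid d V E p"
  shows "universally_rigid d V E p'"
proof -
  have "equivalent n E p' q = equivalent n E p q" for n q
    using assms(1,2) graph_edge_in_vertices unfolding equivalent_def by metis
  moreover have "congruent n V p' q = congruent n V p q" for n q
    using assms(2) unfolding congruent_def by simp
  ultimately show ?thesis
    using assms(3) unfolding universally_rigid_def by simp
qed

lemma equivalent_by_congruent_part:
  assumes "equivalent n E p q" "congruent n W p q" "\<forall>e\<in>E'. e \<in> E \<or> e \<subseteq> W"
  shows "equivalent n E' p q"
  using assms unfolding equivalent_def congruent_def by (metis insert_subset)

lemma sq_diff_affine_combination:
  fixes w x :: "'a \<Rightarrow> real"
  assumes "finite S" "sum w S = 1"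
  shows "((\<Sum>v\<in>S. w v * x v) - y)^2 = (\<Sum>v\<in>S. w v * (x v - y)^2)
           - (\<Sum>u\<in>S. \<Sum>v\<in>S. w u * w v * (x u - x v)^2) / 2"
proof -
  define z where "z v = x v - y" for v
  have "(\<Sum>v\<in>S. w v * x v) - y = (\<Sum>v\<in>S. w v * z v)"
    using assms(2) by (simp add: z_def right_diff_distrib sum_subtractf flip: sum_distrib_right)
  moreover have "(\<Sum>v\<in>S. w v * z v)^2 = (\<Sum>u\<in>S. \<Sum>v\<in>S. w u * w v * (z u * z v))"
    by (simp add: power2_eq_square sum_product algebra_simps)
  moreover have "x u - x v = z u - z v" for u v
    by (simp add: z_def)
  moreover have "(\<Sum>u\<in>S. \<Sum>v\<in>S. w u * w v * (z u - z v)^2)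
      = (\<Sum>u\<in>S. \<Sum>v\<in>S. w u * w v * z u^2) + (\<Sum>u\<in>S. \<Sum>v\<in>S. w u * w v * z v^2)
        - 2 * (\<Sum>u\<in>S. \<Sum>v\<in>S. w u * w v * (z u * z v))"
    by (simp add: power2_diff algebra_simps sum.distrib sum_subtractf sum_distrib_left)
  moreover have "(\<Sum>u\<in>S. \<Sum>v\<in>S. w u * w v * z u^2) = (\<Sum>v\<in>S. w v * z v^2)"
    using assms(2) by (simp add: mult.commute mult.left_commute flip: sum_distrib_left sum_distrib_right)
  moreover have "(\<Sum>u\<in>S. \<Sum>v\<in>S. w u * w v * z v^2) = (\<Sum>v\<in>S. w v * z v^2)"
    using assms(2) by (simp add: mult.assoc flip: sum_distrib_left sum_distrib_right)
  ultimately show ?thesis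
    by (simp add: z_def field_simps)
qed

lemma sqdist_affine_combination:
  assumes "finite S" "sum w S = 1"
  shows "sqdist n (\<lambda>k. \<Sum>v\<in>S. w v * x v k) y = (\<Sum>v\<in>S. w v * sqdist n (x v) y)
           - (\<Sum>u\<in>S. \<Sum>v\<in>S. w u * w v * sqdist n (x u) (x v)) / 2"
proof -
  have "sqdist n (\<lambda>k. \<Sum>v\<in>S. w v * x v k) y
     = (\<Sum>k<n. (\<Sum>v\<in>S. w v * (x v k - y k)^2)
           - (\<Sum>u\<in>S. \<Sum>v\<in>S. w u * w v * (x u k - x v k)^2) / 2)"
    unfolding sqdist_def using sq_diff_affine_combination[OF assms] by simp
  also have "\<dots> = (\<Sum>v\<in>S. w v * sqdist n (x v) y)
           - (\<Sum>u\<in>S. \<Sum>v\<in>S. w u * w v * sqdist n (x u) (x v)) / 2"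
    unfolding sqdist_def sum_subtractf sum_divide_distrib[symmetric] sum_distrib_left
    by (simp add: sum.swap[of _ "{..<n}"] sum.swap[of _ "{..<n}" S])
  finally show ?thesis .
qed

lemma sqdist_affine_combination_eq:
  assumes "finite S" "sum w S = 1"
    and "\<forall>u\<in>S. \<forall>v\<in>S. sqdist n (q u) (q v) = sqdist n (p u) (p v)"
    and "\<forall>v\<in>S. sqdist n (q v) y' = sqdist n (p v) y"
  shows "sqdist n (\<lambda>k. \<Sum>v\<in>S. w v * q v k) y' = sqdist n (\<lambda>k. \<Sum>v\<in>S. w v * p v k) y"
  using assms by (simp add: sqdist_affine_combination)

lemma sqdist_eq_through_affine_combination:
  assumes S: "finite S" "sum w S = 1" and p_i: "p i = (\<lambda>k. \<Sum>v\<in>S. w v * p v k)"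
    and "\<forall>u\<in>S. \<forall>v\<in>S. sqdist n (q u) (q v) = sqdist n (p u) (p v)"
    and "\<forall>v\<in>S. sqdist n (q v) (q i) = sqdist n (p v) (p i)"
    and "\<forall>v\<in>S. sqdist n (q v) (q j) = sqdist n (p v) (p j)"
  shows "sqdist n (q i) (q j) = sqdist n (p i) (p j)"
proof -
  define c where "c = (\<lambda>k. \<Sum>v\<in>S. w v * q v k)"
  have "sqdist n c (q i) = sqdist n (p i) (p i)"
    unfolding c_def by (subst (1) p_i) (rule sqdist_affine_combination_eq; fact)
  then have "k < n \<Longrightarrow> q i k = c k" for k
    by (simp add: sqdist_eq_0_iff)
  then have "sqdist n (q i) (q j) = sqdist n c (q j)"
    by (rule sqdist_cong)
  also have "\<dots> = sqdist n (p i) (p j)"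
    unfolding c_def by (subst p_i) (rule sqdist_affine_combination_eq; fact)
  finally show ?thesis .
qed

lemma congruent_Un_through_affine_combinations:
  assumes "congruent n VA p q" "congruent n VB p q" "finite S" "S \<subseteq> VA \<inter> VB"
    and span: "\<forall>i\<in>VA. \<exists>w. sum w S = 1 \<and> p i = (\<lambda>k. \<Sum>v\<in>S. w v * p v k)"
  shows "congruent n (VA \<union> VB) p q"
proof -
  have A: "sqdist n (q i) (q j) = sqdist n (p i) (p j)" if "i \<in> VA" "j \<in> VA" for i j
    using assms(1) that by (simp add: congruent_iff_sqdist)
  have B: "sqdist n (q i) (q j) = sqdist n (p i) (p j)" if "i \<in> VB" "j \<in> VB" for i j
    using assms(2) that by (simp add: congruent_iff_sqdist)
  have AB: "sqdist n (q i) (q j) = sqdist n (p i) (p j)" if "i \<in> VA" "j \<in> VB" for i j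
  proof -
    obtain w where "sum w S = 1" "p i = (\<lambda>k. \<Sum>v\<in>S. w v * p v k)"
      using span \<open>i \<in> VA\<close> by blast
    moreover have "\<forall>u\<in>S. \<forall>v\<in>S. sqdist n (q u) (q v) = sqdist n (p u) (p v)"
      "\<forall>v\<in>S. sqdist n (q v) (q i) = sqdist n (p v) (p i)"
      "\<forall>v\<in>S. sqdist n (q v) (q j) = sqdist n (p v) (p j)"
      using that assms(4) by (blast intro: A B)+
    ultimately show ?thesis
      using sqdist_eq_through_affine_combination[OF \<open>finite S\<close>] by blast
  qed
  have "sqdist n (q i) (q j) = sqdist n (p i) (p j)" if "i \<in> VA \<union> VB" "j \<in> VA \<union> VB" for i j
    using that A B AB AB[of j i] by (auto simp: sqdist_commute)
  then show ?thesis
    unfolding congruent_iff_sqdist by blast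
qed

lemma homogeneous_system_nontrivial_solution:
  fixes a :: "nat \<Rightarrow> 'a \<Rightarrow> real"
  assumes "finite I" "m < card I"
  shows "\<exists>c. (\<exists>i\<in>I. c i \<noteq> 0) \<and> (\<forall>j<m. (\<Sum>i\<in>I. a j i * c i) = 0)"
  using assms
proof (induction m arbitrary: I a)
  case 0
  then obtain i where "i \<in> I"
    by fastforce
  then show ?case
    by (intro exI[of _ "\<lambda>_. 1"]) auto
next
  case (Suc m)
  show ?case
  proof (cases "\<forall>i\<in>I. a m i = 0")
    case True
    obtain c where "\<exists>i\<in>I. c i \<noteq> 0" "\<forall>j<m. (\<Sum>i\<in>I. a j i * c i) = 0"
      using Suc by (meson Suc_lessD)
    moreover have "(\<Sum>i\<in>I. a m i * c i) = 0"
      using True by simp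
    ultimately show ?thesis
      by (metis less_Suc_eq)
  next
    case False
    then obtain i0 where i0: "i0 \<in> I" "a m i0 \<noteq> 0"
      by auto
    define I' where "I' = I - {i0}"
    have I: "finite I'" "m < card I'" "I = insert i0 I'" "i0 \<notin> I'"
      using Suc.prems i0 by (auto simp: I'_def)
    \<comment> \<open>Gaussian elimination of the unknown \<open>i0\<close> using equation \<open>m\<close>.\<close>
    define b where "b j i = a j i - a j i0 * a m i / a m i0" for j i
    obtain c' where c': "\<exists>i\<in>I'. c' i \<noteq> 0" "\<forall>j<m. (\<Sum>i\<in>I'. b j i * c' i) = 0"
      using Suc.IH[OF I(1,2)] by blast
    define s where "s = (\<Sum>i\<in>I'. a m i * c' i)"
    define c where "c = c'(i0 := - s / a m i0)"
    have sum_c: "(\<Sum>i\<in>I. f i * c i) = f i0 * (- s / a m i0) + (\<Sum>i\<in>I'. f i * c' i)" for f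
    proof -
      have "(\<Sum>i\<in>I'. f i * c i) = (\<Sum>i\<in>I'. f i * c' i)"
        using I(4) by (intro sum.cong) (auto simp: c_def)
      then show ?thesis
        using I by (simp add: c_def)
    qed
    have "(\<Sum>i\<in>I. a j i * c i) = 0" if "j < Suc m" for j
    proof (cases "j = m")
      case False
      have "(\<Sum>i\<in>I'. b j i * c' i) = (\<Sum>i\<in>I'. a j i * c' i) - a j i0 * s / a m i0"
        unfolding b_def s_def
        by (simp add: algebra_simps sum_subtractf sum_distrib_left sum_divide_distrib)
      then show ?thesis
        using c'(2) False that sum_c[of "a j"] by simp
    qed (use sum_c[of "a j"] i0 in \<open>simp add: s_def\<close>)
    moreover have "\<exists>i\<in>I. c i \<noteq> 0"
      using c' I by (auto simp: c_def)
    ultimately show ?thesis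
      by blast
  qed
qed

lemma affine_dependence_in_Rn:
  assumes "finite T" "card T = d + 2" "\<forall>v\<in>T. in_Rn d (p v)"
  shows "\<exists>c. (\<exists>i\<in>T. c i \<noteq> 0) \<and> sum c T = 0 \<and> (\<forall>k. (\<Sum>i\<in>T. c i * p i k) = 0)"
proof -
  define a where "a j v = (if j = 0 then 1 else p v (j - 1))" for j v
  obtain c where c: "\<exists>i\<in>T. c i \<noteq> 0" "\<forall>j<d+1. (\<Sum>i\<in>T. a j i * c i) = 0"
    using homogeneous_system_nontrivial_solution[OF assms(1), of "d+1" a] assms(2) by auto
  have "sum c T = 0"
    using c(2)[rule_format, of 0] by (simp add: a_def)
  moreover have "(\<Sum>i\<in>T. c i * p i k) = 0" for k
  proof (cases "k < d")
    case True
    then show ?thesis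
      using c(2)[rule_format, of "k+1"] by (simp add: a_def mult.commute)
  next
    case False
    then show ?thesis
      using assms(3) by (simp add: in_Rn_def)
  qed
  ultimately show ?thesis
    using c(1) by blast
qed

lemma affine_combination_of_affine_basis:
  assumes S: "finite S" "card S = d + 1" and indep: "aff_indep S p"
    and R: "\<forall>v\<in>insert i S. in_Rn d (p v)"
  shows "\<exists>w. sum w S = 1 \<and> p i = (\<lambda>k. \<Sum>v\<in>S. w v * p v k)"
proof (cases "i \<in> S")
  case True
  then show ?thesis
    using S(1) by (intro exI[of _ "\<lambda>v. if v = i then 1 else 0"]) (simp add: fun_eq_iff if_distrib[of "\<lambda>c. c * _"] cong: if_cong)
next
  case False
  have "card (insert i S) = d + 2"
    using S False by simp
  then obtain c where
    c: "\<exists>j\<in>insert i S. c j \<noteq> 0" "sum c (insert i S) = 0"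
       "\<forall>k. (\<Sum>j\<in>insert i S. c j * p j k) = 0"
    using affine_dependence_in_Rn[OF _ _ R] S by blast
  have c_sum: "c i + sum c S = 0" and c_comb: "\<And>k. c i * p i k + (\<Sum>j\<in>S. c j * p j k) = 0"
    using c(2,3) S False by simp_all
  have "c i \<noteq> 0"
  proof
    assume "c i = 0"
    then have "\<forall>j\<in>S. c j = 0"
      using indep c_sum c_comb unfolding aff_indep_def by auto
    with \<open>c i = 0\<close> c(1) show False
      by auto
  qed
  define w where "w j = - c j / c i" for j
  have "sum w S = 1"
    using c_sum \<open>c i \<noteq> 0\<close> by (simp add: w_def sum_negf flip: sum_divide_distrib) (simp add: field_simps)
  moreover have "p i k = (\<Sum>v\<in>S. w v * p v k)" for k
    using c_comb[of k] \<open>c i \<noteq> 0\<close>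
    by (simp add: w_def sum_negf flip: sum_divide_distrib) (simp add: field_simps)
  ultimately show ?thesis
    by auto
qed

theorem theorem5:
  fixes d :: nat and VA VB :: "'v set" and EA EB :: "'v set set"
    and pA pB :: "'v \<Rightarrow> nat \<Rightarrow> real"
  assumes "d \<ge> 1"
    and "framework d VA EA pA" and "framework d VB EB pB"
    and "universally_rigid d VA EA pA" and "universally_rigid d VB EB pB"
    and "general_position d VA pA" and "general_position d VB pB"
    and "VA \<inter> VB \<subset> VA" and "VA \<inter> VB \<subset> VB"
    and "card (VA \<inter> VB) \<ge> d + 1"
    and "\<forall>i\<in>VA \<inter> VB. pA i = pB i"
  shows "universally_rigid d (VA \<union> VB)
           ((EA \<union> EB) - {e \<in> EB - EA. e \<subseteq> VA \<inter> VB})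
           (\<lambda>i. if i \<in> VA then pA i else pB i)"
proof -
  define p where "p = (\<lambda>i. if i \<in> VA then pA i else pB i)"
  define E where "E = (EA \<union> EB) - {e \<in> EB - EA. e \<subseteq> VA \<inter> VB}"
  have A: "graph VA EA" "\<forall>i\<in>VA. in_Rn d (pA i)" "\<forall>i\<in>VA. p i = pA i"
    and B: "graph VB EB" "\<forall>i\<in>VB. p i = pB i"
    using assms(2,3,11) by (auto simp: framework_def p_def)
  have rigid_A: "universally_rigid d VA EA p" and rigid_B: "universally_rigid d VB EB p"
    using universally_rigid_cong A(1,3) B assms(4,5) by blast+
  obtain S where S: "S \<subseteq> VA \<inter> VB" "card S = d + 1"
    using obtain_subset_with_card_n[OF assms(10)] by metis
  have "finite S"
    using S(1) A(1) finite_subset unfolding graph_def by blast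
  have "aff_indep S pA"
    using assms(6) S unfolding general_position_def by auto
  then have span: "\<forall>i\<in>VA. \<exists>w. sum w S = 1 \<and> p i = (\<lambda>k. \<Sum>v\<in>S. w v * p v k)"
    using affine_combination_of_affine_basis[OF \<open>finite S\<close> S(2)] A(2,3) S(1)
    by (simp add: subset_iff cong: sum.cong)
  show ?thesis
    unfolding universally_rigid_def p_def[symmetric] E_def[symmetric]
  proof (intro allI impI)
    fix d' q
    assume d': "d \<le> d'" and q: "\<forall>i\<in>VA \<union> VB. in_Rn d' (q i)" and "equivalent d' E p q"
    have "equivalent d' EA p q"
      using \<open>equivalent d' E p q\<close> unfolding equivalent_def E_def by blast
    then have "congruent d' VA p q"
      using rigid_A d' q unfolding universally_rigid_def by simp
    with \<open>equivalent d' E p q\<close> have "equivalent d' EB p q"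
      by (rule equivalent_by_congruent_part) (auto simp: E_def)
    then have "congruent d' VB p q"
      using rigid_B d' q unfolding universally_rigid_def by simp
    with \<open>congruent d' VA p q\<close> show "congruent d' (VA \<union> VB) p q"
      using congruent_Un_through_affine_combinations \<open>finite S\<close> S(1) span by blast
  qed
qed

end
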